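(* Let $\alpha=(\alpha_1,\dots,\alpha_k)$ be an integer composition of $n>0$ and let $\max(\alpha)$ be its largest part. Then the parabolic Tamari lattice $\mathrm{Tam}(\alpha)$ has order dimension $n-\max(\alpha)$.
   Context: The $\alpha$-regions are the sets $\{\alpha_1+\dots+\alpha_{i-1}+1,\dots,\alpha_1+\dots+\alpha_i\}$, $i\in[k]$, of nodes in $[n]$. An $\alpha$-arc is a pair $w_{a,b}=(a,b)$ with $1\le a<b\le n$ and $a,b$ in different $\alpha$-regions. Let $G_\alpha$ be the directed graph on $\alpha$-arcs with an edge $w_{a_1,b_1}\to w_{a_2,b_2}$ between distinct arcs whenever either $a_1,a_2$ are in the same $\alpha$-region and $a_1\le a_2<b_2\le b_1$, or $a_1,a_2$ are in different $\alpha$-regions, $a_2<a_1<b_2\le b_1$, and $a_1,b_2$ are in different $\alpha$-regions. For a directed graph $G$, a maximal orthogonal pair is a pair $(X,Y)$ of disjoint vertex subsets with no edge from $X$ to $Y$, maximal for this property; ordered by $X\subseteq X'$ they form a lattice $L(G)$. $\mathrm{Tam}(\alpha):=L(G_\alpha)$ (the extremal lattice with Galois graph $G_\alpha$). The order dimension of a poset is the least $d$ such that it embeds as a subposet of $\mathbb R^d$ with the componentwise order. *)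

theory Defs
  imports Main "HOL.Real"
begin

text \<open>Integer composition alpha = (alpha_1,...,alpha_k) is a list of positive naturals.
  Regions are 0-indexed here: region i = {alpha_1+...+alpha_i + 1 .. alpha_1+...+alpha_(i+1)}.\<close>

definition is_composition :: "nat list \<Rightarrow> nat \<Rightarrow> bool" where
  "is_composition \<alpha> n \<longleftrightarrow> (\<forall>p\<in>set \<alpha>. 0 < p) \<and> sum_list \<alpha> = n"

definition alpha_region :: "nat list \<Rightarrow> nat \<Rightarrow> nat set" where
  "alpha_region \<alpha> i = {sum_list (take i \<alpha>) + 1 .. sum_list (take (Suc i) \<alpha>)}"

definition same_region :: "nat list \<Rightarrow> nat \<Rightarrow> nat \<Rightarrow> bool" where
  "same_region \<alpha> a b \<longleftrightarrow> (\<exists>i<length \<alpha>. a \<in> alpha_region \<alpha> i \<and> b \<in> alpha_region \<alpha> i)"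

definition alpha_arcs :: "nat list \<Rightarrow> (nat \<times> nat) set" where
  "alpha_arcs \<alpha> = {(a, b). 1 \<le> a \<and> a < b \<and> b \<le> sum_list \<alpha> \<and> \<not> same_region \<alpha> a b}"

definition alpha_edge :: "nat list \<Rightarrow> nat \<times> nat \<Rightarrow> nat \<times> nat \<Rightarrow> bool" where
  "alpha_edge \<alpha> w1 w2 \<longleftrightarrow>
     w1 \<in> alpha_arcs \<alpha> \<and> w2 \<in> alpha_arcs \<alpha> \<and> w1 \<noteq> w2 \<and>
     (let a1 = fst w1; b1 = snd w1; a2 = fst w2; b2 = snd w2 in
       (same_region \<alpha> a1 a2 \<and> a1 \<le> a2 \<and> a2 < b2 \<and> b2 \<le> b1) \<or>
       (\<not> same_region \<alpha> a1 a2 \<and> a2 < a1 \<and> a1 < b2 \<and> b2 \<le> b1 \<and> \<not> same_region \<alpha> a1 b2))"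

definition orthogonal_pair :: "'v set \<Rightarrow> ('v \<Rightarrow> 'v \<Rightarrow> bool) \<Rightarrow> 'v set \<Rightarrow> 'v set \<Rightarrow> bool" where
  "orthogonal_pair V E X Y \<longleftrightarrow> X \<subseteq> V \<and> Y \<subseteq> V \<and> X \<inter> Y = {} \<and> (\<forall>x\<in>X. \<forall>y\<in>Y. \<not> E x y)"

definition max_orthogonal_pair :: "'v set \<Rightarrow> ('v \<Rightarrow> 'v \<Rightarrow> bool) \<Rightarrow> 'v set \<Rightarrow> 'v set \<Rightarrow> bool" where
  "max_orthogonal_pair V E X Y \<longleftrightarrow> orthogonal_pair V E X Y \<and>
     (\<forall>X' Y'. orthogonal_pair V E X' Y' \<and> X \<subseteq> X' \<and> Y \<subseteq> Y' \<longrightarrow> X' = X \<and> Y' = Y)"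

definition mop_lattice :: "'v set \<Rightarrow> ('v \<Rightarrow> 'v \<Rightarrow> bool) \<Rightarrow> ('v set \<times> 'v set) set" where
  "mop_lattice V E = {(X, Y). max_orthogonal_pair V E X Y}"

definition mop_le :: "('v set \<times> 'v set) \<Rightarrow> ('v set \<times> 'v set) \<Rightarrow> bool" where
  "mop_le p q \<longleftrightarrow> fst p \<subseteq> fst q"

definition Tam :: "nat list \<Rightarrow> ((nat \<times> nat) set \<times> (nat \<times> nat) set) set" where
  "Tam \<alpha> = mop_lattice (alpha_arcs \<alpha>) (alpha_edge \<alpha>)"

text \<open>Order dimension: least d such that the poset embeds into R^d (componentwise order).
  Points of R^d are represented as functions nat \<Rightarrow> real, only coordinates < d matter.\<close>

definition embeds_in_Rd :: "'a set \<Rightarrow> ('a \<Rightarrow> 'a \<Rightarrow> bool) \<Rightarrow> nat \<Rightarrow> bool" where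
  "embeds_in_Rd P le d \<longleftrightarrow> (\<exists>f :: 'a \<Rightarrow> nat \<Rightarrow> real.
      inj_on f P \<and> (\<forall>x\<in>P. \<forall>y\<in>P. le x y \<longleftrightarrow> (\<forall>i<d. f x i \<le> f y i)))"

definition order_dimension :: "'a set \<Rightarrow> ('a \<Rightarrow> 'a \<Rightarrow> bool) \<Rightarrow> nat" where
  "order_dimension P le = (LEAST d. embeds_in_Rd P le d)"

end

theory Submission
  imports Defs
begin

(* Let r send every node to the index of its alpha-region.  The Galois graph G_alpha only depends
   on the monotone map r, so we study the same graph on the arcs of an arbitrary interval {lo..hi}.

   Upper bound: a maximal orthogonal pair (X, Y) is determined by X.  Restricting to {lo+1..hi}
   maps maximal orthogonal pairs to maximal orthogonal pairs, and X is recovered from its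
   restriction and its arcs starting at lo; the latter sets form a chain, so one more real
   coordinate (their cardinality) suffices.  Symmetrically, removing hi costs one coordinate
   recording the Y-part on the arcs ending at hi.  Removing end nodes outside a largest block x
   until only one region is left (and there are no arcs) embeds Tam(alpha) into R^d with
   d = n - max alpha.

   Lower bound: linking every node to the next node with the same position inside its region
   gives d pairwise non-adjacent arcs.  Every independent set I of a Galois graph G produces a
   standard example of size |I| inside L(G), which needs |I| coordinates. *)

section \<open>Maximal orthogonal pairs\<close>

definition right_orth :: "'v set \<Rightarrow> ('v \<Rightarrow> 'v \<Rightarrow> bool) \<Rightarrow> 'v set \<Rightarrow> 'v set" where
  "right_orth V E X = {y\<in>V. \<forall>x\<in>X. x \<noteq> y \<and> \<not> E x y}"

definition left_orth :: "'v set \<Rightarrow> ('v \<Rightarrow> 'v \<Rightarrow> bool) \<Rightarrow> 'v set \<Rightarrow> 'v set" where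
  "left_orth V E Y = {x\<in>V. \<forall>y\<in>Y. x \<noteq> y \<and> \<not> E x y}"

lemma left_orth_antimono: "Y \<subseteq> Y' \<Longrightarrow> left_orth V E Y' \<subseteq> left_orth V E Y"
  unfolding left_orth_def by blast

lemma right_orth_antimono: "X \<subseteq> X' \<Longrightarrow> right_orth V E X' \<subseteq> right_orth V E X"
  unfolding right_orth_def by blast

lemma subset_left_orth_right_orth: "X \<subseteq> V \<Longrightarrow> X \<subseteq> left_orth V E (right_orth V E X)"
  unfolding left_orth_def right_orth_def by blast

lemma subset_right_orth_left_orth: "Y \<subseteq> V \<Longrightarrow> Y \<subseteq> right_orth V E (left_orth V E Y)"
  unfolding left_orth_def right_orth_def by blast

lemma left_orth_subset: "left_orth V E Y \<subseteq> V"
  unfolding left_orth_def by blast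

lemma right_orth_subset: "right_orth V E X \<subseteq> V"
  unfolding right_orth_def by blast

lemma orthogonal_pair_iff_subset_left_orth:
  "orthogonal_pair V E X Y \<longleftrightarrow> Y \<subseteq> V \<and> X \<subseteq> left_orth V E Y"
  unfolding orthogonal_pair_def left_orth_def by blast

lemma orthogonal_pair_iff_subset_right_orth:
  "orthogonal_pair V E X Y \<longleftrightarrow> X \<subseteq> V \<and> Y \<subseteq> right_orth V E X"
  unfolding orthogonal_pair_def right_orth_def by blast

lemma max_orthogonal_pair_iff:
  "max_orthogonal_pair V E X Y \<longleftrightarrow> X = left_orth V E Y \<and> Y = right_orth V E X"
proof
  assume max: "max_orthogonal_pair V E X Y"
  then have "orthogonal_pair V E X Y"
    by (simp add: max_orthogonal_pair_def)
  then have "orthogonal_pair V E (left_orth V E Y) Y" "X \<subseteq> left_orth V E Y"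
    and "orthogonal_pair V E X (right_orth V E X)" "Y \<subseteq> right_orth V E X"
    unfolding orthogonal_pair_def left_orth_def right_orth_def by blast+
  with max show "X = left_orth V E Y \<and> Y = right_orth V E X"
    unfolding max_orthogonal_pair_def by blast
next
  assume "X = left_orth V E Y \<and> Y = right_orth V E X"
  then have X: "X = left_orth V E Y" and Y: "Y = right_orth V E X"
    by blast+
  have "Y \<subseteq> V"
    unfolding Y by (rule right_orth_subset)
  then have "orthogonal_pair V E X Y"
    by (simp add: orthogonal_pair_iff_subset_left_orth flip: X)
  moreover have "X' = X \<and> Y' = Y"
    if "orthogonal_pair V E X' Y'" "X \<subseteq> X'" "Y \<subseteq> Y'" for X' Y'
  proof -
    have "X' \<subseteq> left_orth V E Y'"
      using that(1) by (simp add: orthogonal_pair_iff_subset_left_orth)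
    also have "\<dots> \<subseteq> X"
      unfolding X using that(3) by (rule left_orth_antimono)
    finally have "X' \<subseteq> X" .
    have "Y' \<subseteq> right_orth V E X'"
      using that(1) by (simp add: orthogonal_pair_iff_subset_right_orth)
    also have "\<dots> \<subseteq> Y"
      unfolding Y using that(2) by (rule right_orth_antimono)
    finally have "Y' \<subseteq> Y" .
    with \<open>X' \<subseteq> X\<close> that(2,3) show ?thesis
      by blast
  qed
  ultimately show "max_orthogonal_pair V E X Y"
    unfolding max_orthogonal_pair_def by blast
qed

lemma max_orthogonal_pair_left_orth_right_orth:
  assumes "X \<subseteq> V"
  shows "max_orthogonal_pair V E (left_orth V E (right_orth V E X)) (right_orth V E X)"
  unfolding max_orthogonal_pair_iff
proof (rule conjI[OF refl], rule subset_antisym)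
  show "right_orth V E X \<subseteq> right_orth V E (left_orth V E (right_orth V E X))"
    by (rule subset_right_orth_left_orth[OF right_orth_subset])
  show "right_orth V E (left_orth V E (right_orth V E X)) \<subseteq> right_orth V E X"
    using subset_left_orth_right_orth[OF assms] by (rule right_orth_antimono)
qed

lemma max_orthogonal_pair_right_orth_left_orth:
  assumes "Y \<subseteq> V"
  shows "max_orthogonal_pair V E (left_orth V E Y) (right_orth V E (left_orth V E Y))"
  unfolding max_orthogonal_pair_iff
proof (rule conjI[OF _ refl], rule subset_antisym)
  show "left_orth V E Y \<subseteq> left_orth V E (right_orth V E (left_orth V E Y))"
    by (rule subset_left_orth_right_orth[OF left_orth_subset])
  show "left_orth V E (right_orth V E (left_orth V E Y)) \<subseteq> left_orth V E Y"
    using subset_right_orth_left_orth[OF assms] by (rule left_orth_antimono)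
qed

lemma max_orthogonal_pair_mem_left:
  assumes "max_orthogonal_pair V E X Y"
  shows "x \<in> X \<longleftrightarrow> x \<in> V \<and> (\<forall>y\<in>Y. x \<noteq> y \<and> \<not> E x y)"
proof -
  have "X = left_orth V E Y"
    using assms[unfolded max_orthogonal_pair_iff] by (rule conjunct1)
  then show ?thesis
    by (simp add: left_orth_def)
qed

lemma max_orthogonal_pair_mem_right:
  assumes "max_orthogonal_pair V E X Y"
  shows "y \<in> Y \<longleftrightarrow> y \<in> V \<and> (\<forall>x\<in>X. x \<noteq> y \<and> \<not> E x y)"
proof -
  have "Y = right_orth V E X"
    using assms[unfolded max_orthogonal_pair_iff] by (rule conjunct2)
  then show ?thesis
    by (simp add: right_orth_def)
qed

lemma max_orthogonal_pair_subset_V: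
  assumes "max_orthogonal_pair V E X Y"
  shows "X \<subseteq> V \<and> Y \<subseteq> V"
  using max_orthogonal_pair_mem_left[OF assms] max_orthogonal_pair_mem_right[OF assms] by blast

lemma max_orthogonal_pair_not_related:
  assumes "max_orthogonal_pair V E X Y" "x \<in> X" "y \<in> Y"
  shows "\<not> (x = y \<or> E x y)"
  using max_orthogonal_pair_mem_left[OF assms(1)] assms(2,3) by blast

lemma max_orthogonal_pair_unique:
  assumes "max_orthogonal_pair V E X Y" "max_orthogonal_pair V E X Y'"
  shows "Y = Y'"
  using max_orthogonal_pair_mem_right[OF assms(1)] max_orthogonal_pair_mem_right[OF assms(2)]
  by blast

lemma max_orthogonal_pair_subset_iff:
  assumes "max_orthogonal_pair V E X Y" "max_orthogonal_pair V E X' Y'"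
  shows "X \<subseteq> X' \<longleftrightarrow> Y' \<subseteq> Y"
proof -
  have X: "X = left_orth V E Y" and Y: "Y = right_orth V E X"
    and X': "X' = left_orth V E Y'" and Y': "Y' = right_orth V E X'"
    using assms unfolding max_orthogonal_pair_iff by blast+
  show ?thesis
  proof
    show "Y' \<subseteq> Y" if "X \<subseteq> X'"
      unfolding Y Y' using that by (rule right_orth_antimono)
    show "X \<subseteq> X'" if "Y' \<subseteq> Y"
      unfolding X X' using that by (rule left_orth_antimono)
  qed
qed

lemma max_orthogonal_pair_left_closed:
  assumes max: "max_orthogonal_pair V E X Y" and "x \<in> X" "z \<in> V"
    and out: "\<And>y. y \<in> V \<Longrightarrow> z = y \<or> E z y \<Longrightarrow> x = y \<or> E x y"
  shows "z \<in> X"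
proof (rule ccontr)
  assume "z \<notin> X"
  then obtain y where y: "y \<in> Y" "z = y \<or> E z y"
    using max_orthogonal_pair_mem_left[OF max, of z] \<open>z \<in> V\<close> by blast
  then have "x = y \<or> E x y"
    using out max_orthogonal_pair_subset_V[OF max] by blast
  then show False
    using max_orthogonal_pair_not_related[OF max \<open>x \<in> X\<close> \<open>y \<in> Y\<close>] by blast
qed

lemma max_orthogonal_pair_right_closed:
  assumes max: "max_orthogonal_pair V E X Y" and "y \<in> Y" "z \<in> V"
    and into: "\<And>x. x \<in> V \<Longrightarrow> x = z \<or> E x z \<Longrightarrow> x = y \<or> E x y"
  shows "z \<in> Y"
proof (rule ccontr)
  assume "z \<notin> Y"
  then obtain x where x: "x \<in> X" "x = z \<or> E x z"
    using max_orthogonal_pair_mem_right[OF max, of z] \<open>z \<in> V\<close> by blast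
  then have "x = y \<or> E x y"
    using into max_orthogonal_pair_subset_V[OF max] by blast
  then show False
    using max_orthogonal_pair_not_related[OF max \<open>x \<in> X\<close> \<open>y \<in> Y\<close>] by blast
qed

lemma max_orthogonal_pair_restrict:
  assumes max: "max_orthogonal_pair V E X Y" and "V' \<subseteq> V"
    and left_witness:
      "\<And>x y. x \<in> V' \<Longrightarrow> y \<in> Y \<Longrightarrow> x = y \<or> E x y \<Longrightarrow> \<exists>y'\<in>Y \<inter> V'. x = y' \<or> E x y'"
    and right_witness:
      "\<And>x y. y \<in> V' \<Longrightarrow> x \<in> X \<Longrightarrow> x = y \<or> E x y \<Longrightarrow> \<exists>x'\<in>X \<inter> V'. x' = y \<or> E x' y"
  shows "max_orthogonal_pair V' E (X \<inter> V') (Y \<inter> V')"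
  unfolding max_orthogonal_pair_iff
proof (intro conjI equalityI subsetI)
  show "x \<in> left_orth V' E (Y \<inter> V')" if "x \<in> X \<inter> V'" for x
    using that max_orthogonal_pair_not_related[OF max] unfolding left_orth_def by blast
  show "y \<in> right_orth V' E (X \<inter> V')" if "y \<in> Y \<inter> V'" for y
    using that max_orthogonal_pair_not_related[OF max] unfolding right_orth_def by blast
next
  fix x assume x: "x \<in> left_orth V' E (Y \<inter> V')"
  then have "x \<in> V'"
    by (simp add: left_orth_def)
  have "x \<in> X"
  proof (rule ccontr)
    assume "x \<notin> X"
    then obtain y where "y \<in> Y" "x = y \<or> E x y"
      using max_orthogonal_pair_mem_left[OF max, of x] \<open>x \<in> V'\<close> \<open>V' \<subseteq> V\<close> by blast
    then show False
      using left_witness[OF \<open>x \<in> V'\<close>] x unfolding left_orth_def by blast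
  qed
  with \<open>x \<in> V'\<close> show "x \<in> X \<inter> V'" by blast
next
  fix y assume y: "y \<in> right_orth V' E (X \<inter> V')"
  then have "y \<in> V'"
    by (simp add: right_orth_def)
  have "y \<in> Y"
  proof (rule ccontr)
    assume "y \<notin> Y"
    then obtain x where "x \<in> X" "x = y \<or> E x y"
      using max_orthogonal_pair_mem_right[OF max, of y] \<open>y \<in> V'\<close> \<open>V' \<subseteq> V\<close> by blast
    then show False
      using right_witness[OF \<open>y \<in> V'\<close>] y unfolding right_orth_def by blast
  qed
  with \<open>y \<in> V'\<close> show "y \<in> Y \<inter> V'" by blast
qed

lemma max_orthogonal_pair_cong:
  assumes "\<And>x y. x \<in> V \<Longrightarrow> y \<in> V \<Longrightarrow> E x y = E' x y"
  shows "max_orthogonal_pair V E X Y = max_orthogonal_pair V E' X Y"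
proof -
  have "left_orth V E Y = left_orth V E' Y" "right_orth V E X = right_orth V E' X"
    if "X \<subseteq> V" "Y \<subseteq> V"
    using that unfolding left_orth_def right_orth_def by (auto simp: assms subset_iff)
  then show ?thesis
    by (metis max_orthogonal_pair_subset_V max_orthogonal_pair_iff)
qed

section \<open>Embeddings into real space\<close>

lemma embeds_in_RdI:
  fixes f :: "'a \<Rightarrow> nat \<Rightarrow> real"
  assumes "\<And>x y. x \<in> P \<Longrightarrow> y \<in> P \<Longrightarrow> le x y \<Longrightarrow> le y x \<Longrightarrow> x = y"
    and "\<And>x y. x \<in> P \<Longrightarrow> y \<in> P \<Longrightarrow> le x y \<longleftrightarrow> (\<forall>i<d. f x i \<le> f y i)"
  shows "embeds_in_Rd P le d"
  unfolding embeds_in_Rd_def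
proof (intro exI conjI ballI)
  show "inj_on f P"
    using assms by (intro inj_onI) (metis order_refl)
qed (use assms in blast)

lemma embeds_in_Rd_at_most_one:
  assumes "P \<subseteq> {x}" "le x x"
  shows "embeds_in_Rd P le d"
  using assms by (intro embeds_in_RdI[where f = "\<lambda>_ _. 0"]) auto

lemma embeds_in_Rd_subset_Suc:
  fixes P P' :: "'a set set" and c :: "'a set \<Rightarrow> real"
  assumes "embeds_in_Rd P' (\<subseteq>) d" and "\<And>A. A \<in> P \<Longrightarrow> \<pi> A \<in> P'"
    and "\<And>A B. A \<in> P \<Longrightarrow> B \<in> P \<Longrightarrow> A \<subseteq> B \<longleftrightarrow> \<pi> A \<subseteq> \<pi> B \<and> c A \<le> c B"
  shows "embeds_in_Rd P (\<subseteq>) (Suc d)"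
proof -
  obtain f :: "'a set \<Rightarrow> nat \<Rightarrow> real"
    where f: "\<forall>A\<in>P'. \<forall>B\<in>P'. A \<subseteq> B \<longleftrightarrow> (\<forall>i<d. f A i \<le> f B i)"
    using assms(1) unfolding embeds_in_Rd_def by blast
  let ?g = "\<lambda>A i. if i < d then f (\<pi> A) i else c A"
  have "A \<subseteq> B \<longleftrightarrow> (\<forall>i<Suc d. ?g A i \<le> ?g B i)" if "A \<in> P" "B \<in> P" for A B
    using assms(3)[OF that] f assms(2) that by (auto simp: less_Suc_eq)
  then show ?thesis
    by (intro embeds_in_RdI[where f = ?g]) auto
qed

lemma standard_example_card_le:
  assumes "embeds_in_Rd P le d" and "finite I"
    and AB: "\<And>u. u \<in> I \<Longrightarrow> A u \<in> P \<and> B u \<in> P"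
    and not_le: "\<And>u. u \<in> I \<Longrightarrow> \<not> le (A u) (B u)"
    and le: "\<And>u v. u \<in> I \<Longrightarrow> v \<in> I \<Longrightarrow> u \<noteq> v \<Longrightarrow> le (A u) (B v)"
  shows "card I \<le> d"
proof -
  obtain f :: "_ \<Rightarrow> nat \<Rightarrow> real" where f: "\<forall>x\<in>P. \<forall>y\<in>P. le x y \<longleftrightarrow> (\<forall>i<d. f x i \<le> f y i)"
    using assms(1) unfolding embeds_in_Rd_def by blast
  have "\<exists>i<d. f (B u) i < f (A u) i" if "u \<in> I" for u
    using f AB[OF that] not_le[OF that] by (auto simp: not_le)
  then obtain c where c: "\<And>u. u \<in> I \<Longrightarrow> c u < d \<and> f (B u) (c u) < f (A u) (c u)"
    by metis
  have "inj_on c I"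
  proof (rule inj_onI, rule ccontr)
    fix u v assume uv: "u \<in> I" "v \<in> I" "c u = c v" "u \<noteq> v"
    then have "f (A u) (c u) \<le> f (B v) (c u)" "f (A v) (c u) \<le> f (B u) (c u)"
      using f AB le c by (metis uv(3))+
    moreover have "f (B u) (c u) < f (A u) (c u)" "f (B v) (c u) < f (A v) (c u)"
      using c[OF uv(1)] c[OF uv(2)] uv(3) by simp_all
    ultimately show False
      by linarith
  qed
  then have "card I \<le> card {..<d}"
    using c by (intro card_inj_on_le) auto
  then show ?thesis
    by simp
qed

lemma mop_lattice_independent_card_le:
  assumes "embeds_in_Rd (mop_lattice V E) mop_le d" and "I \<subseteq> V" "finite I"
    and independent: "\<And>u v. u \<in> I \<Longrightarrow> v \<in> I \<Longrightarrow> u \<noteq> v \<Longrightarrow> \<not> E u v"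
  shows "card I \<le> d"
proof (rule standard_example_card_le[OF assms(1,3),
      where A = "\<lambda>u. (left_orth V E (right_orth V E {u}), right_orth V E {u})"
        and B = "\<lambda>u. (left_orth V E {u}, right_orth V E (left_orth V E {u}))"])
  fix u assume "u \<in> I"
  then have "{u} \<subseteq> V"
    using assms(2) by blast
  then show "(left_orth V E (right_orth V E {u}), right_orth V E {u}) \<in> mop_lattice V E \<and>
      (left_orth V E {u}, right_orth V E (left_orth V E {u})) \<in> mop_lattice V E"
    by (simp add: mop_lattice_def max_orthogonal_pair_left_orth_right_orth
        max_orthogonal_pair_right_orth_left_orth)
  have "u \<in> left_orth V E (right_orth V E {u})" "u \<notin> left_orth V E {u}"
    using subset_left_orth_right_orth[OF \<open>{u} \<subseteq> V\<close>] by (auto simp: left_orth_def)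
  then show "\<not> mop_le (left_orth V E (right_orth V E {u}), right_orth V E {u})
      (left_orth V E {u}, right_orth V E (left_orth V E {u}))"
    by (auto simp: mop_le_def)
next
  fix u v assume "u \<in> I" "v \<in> I" "u \<noteq> v"
  then have "v \<in> right_orth V E {u}"
    using assms(2) independent by (auto simp: right_orth_def)
  then show "mop_le (left_orth V E (right_orth V E {u}), right_orth V E {u})
      (left_orth V E {v}, right_orth V E (left_orth V E {v}))"
    by (auto simp: mop_le_def left_orth_def)
qed

lemma mem_fst_mop_lattice: "X \<in> fst ` mop_lattice V E \<longleftrightarrow> (\<exists>Y. max_orthogonal_pair V E X Y)"
  by (force simp: mop_lattice_def)

lemma embeds_in_Rd_mop_lattice:
  assumes "embeds_in_Rd (fst ` mop_lattice V E) (\<subseteq>) d"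
  shows "embeds_in_Rd (mop_lattice V E) mop_le d"
proof -
  obtain f :: "'a set \<Rightarrow> nat \<Rightarrow> real"
    where f: "\<forall>A\<in>fst ` mop_lattice V E. \<forall>B\<in>fst ` mop_lattice V E. A \<subseteq> B \<longleftrightarrow> (\<forall>i<d. f A i \<le> f B i)"
    using assms unfolding embeds_in_Rd_def by blast
  show ?thesis
  proof (rule embeds_in_RdI[where f = "\<lambda>p. f (fst p)"])
    fix p q assume "p \<in> mop_lattice V E" "q \<in> mop_lattice V E" "mop_le p q" "mop_le q p"
    then show "p = q"
      unfolding mop_lattice_def mop_le_def
      by (auto dest: max_orthogonal_pair_unique)
  qed (use f in \<open>auto simp: mop_le_def\<close>)
qed

lemma comparable_if_up_closed:
  assumes total: "\<And>u v. u \<in> S \<Longrightarrow> v \<in> S \<Longrightarrow> u \<noteq> v \<Longrightarrow> R u v \<or> R v u"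
    and "A \<subseteq> S" "B \<subseteq> S"
    and "\<And>u v. u \<in> A \<Longrightarrow> v \<in> S \<Longrightarrow> R u v \<Longrightarrow> v \<in> A"
    and "\<And>u v. u \<in> B \<Longrightarrow> v \<in> S \<Longrightarrow> R u v \<Longrightarrow> v \<in> B"
  shows "A \<subseteq> B \<or> B \<subseteq> A"
proof (rule ccontr)
  assume "\<not> (A \<subseteq> B \<or> B \<subseteq> A)"
  then obtain u v where "u \<in> A" "u \<notin> B" "v \<in> B" "v \<notin> A"
    by blast
  with assms show False
    by (metis subsetD)
qed

lemma card_le_iff_subset_if_comparable:
  assumes "finite A" "finite B" "A \<subseteq> B \<or> B \<subseteq> A"
  shows "card A \<le> card B \<longleftrightarrow> A \<subseteq> B"
proof
  show "A \<subseteq> B" if "card A \<le> card B"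
  proof (rule ccontr)
    assume "\<not> A \<subseteq> B"
    with assms(3) have "B \<subset> A"
      by blast
    with \<open>finite A\<close> have "card B < card A"
      by (rule psubset_card_mono)
    with that show False
      by simp
  qed
  show "card A \<le> card B" if "A \<subseteq> B"
    using \<open>finite B\<close> that by (rule card_mono)
qed

section \<open>The arc graph of an interval of nodes\<close>

(* For r = region_index alpha, interval_arcs r 1 n and arc_edge r are the vertices and edges of
   G_alpha (Tam_eq below). *)

definition interval_arcs :: "(nat \<Rightarrow> nat) \<Rightarrow> nat \<Rightarrow> nat \<Rightarrow> (nat \<times> nat) set" where
  "interval_arcs r lo hi = {(a, b). lo \<le> a \<and> a < b \<and> b \<le> hi \<and> r a \<noteq> r b}"

fun arc_edge :: "(nat \<Rightarrow> nat) \<Rightarrow> nat \<times> nat \<Rightarrow> nat \<times> nat \<Rightarrow> bool" where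
  "arc_edge r (a, b) (a', b') \<longleftrightarrow> (a, b) \<noteq> (a', b') \<and>
     ((r a = r a' \<and> a \<le> a' \<and> a' < b' \<and> b' \<le> b) \<or>
      (r a \<noteq> r a' \<and> a' < a \<and> a < b' \<and> b' \<le> b \<and> r a \<noteq> r b'))"

abbreviation arc_lattice :: "(nat \<Rightarrow> nat) \<Rightarrow> nat \<Rightarrow> nat \<Rightarrow> ((nat \<times> nat) set \<times> (nat \<times> nat) set) set" where
  "arc_lattice r lo hi \<equiv> mop_lattice (interval_arcs r lo hi) (arc_edge r)"

abbreviation arc_mop :: "(nat \<Rightarrow> nat) \<Rightarrow> nat \<Rightarrow> nat \<Rightarrow> (nat \<times> nat) set \<Rightarrow> (nat \<times> nat) set \<Rightarrow> bool" where
  "arc_mop r lo hi X Y \<equiv> max_orthogonal_pair (interval_arcs r lo hi) (arc_edge r) X Y"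

lemma mem_interval_arcs [simp]:
  "(a, b) \<in> interval_arcs r lo hi \<longleftrightarrow> lo \<le> a \<and> a < b \<and> b \<le> hi \<and> r a \<noteq> r b"
  by (simp add: interval_arcs_def)

lemma finite_interval_arcs: "finite (interval_arcs r lo hi)"
  by (rule finite_subset[of _ "{lo..hi} \<times> {lo..hi}"]) (auto simp: interval_arcs_def)

lemma mono_less_if_neq: "mono r \<Longrightarrow> a \<le> b \<Longrightarrow> r a \<noteq> r b \<Longrightarrow> r a < (r b :: nat)"
  using monoD order_less_le by blast

lemma arc_edge_extend_end:
  assumes "a < b" "b \<le> b'" "(a, b) = w \<or> arc_edge r (a, b) w"
  shows "(a, b') = w \<or> arc_edge r (a, b') w"
  using assms by (cases w) auto

lemma arc_edge_lower_start:
  assumes "mono r" "a0 \<le> a" "r a0 = r a" "a < b" "a0 \<le> fst w" "(a, b) = w \<or> arc_edge r (a, b) w"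
  shows "(a0, b) = w \<or> arc_edge r (a0, b) w"
proof (cases w)
  case (Pair a' b')
  have "r a' = r a" if "a' \<le> a"
    using monoD[OF assms(1), of a0 a'] monoD[OF assms(1), of a' a] assms(3,5) Pair that by simp
  with assms(2-6) Pair show ?thesis
    by auto
qed

lemma arc_edge_into_lower_start:
  assumes "mono r" "a < b" "a' < b" "r a' \<noteq> r b"
    and key: "r a < r a' \<or> (r a = r a' \<and> a' < a)" and "w = (a', b) \<or> arc_edge r w (a', b)"
  shows "w = (a, b) \<or> arc_edge r w (a, b)"
proof (cases w)
  case (Pair a1 b1)
  have earlier: "x < y" if "r x < r y" for x y
    using monoD[OF assms(1), of y x] that by (meson not_le)
  from assms(6) Pair consider (eq) "a1 = a'" "b1 = b"
    | (same) "r a1 = r a'" "a1 \<le> a'" "b \<le> b1"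
    | (diff) "r a1 \<noteq> r a'" "a' < a1" "a1 < b" "b \<le> b1" "r a1 \<noteq> r b"
    by auto
  then have "arc_edge r (a1, b1) (a, b)"
  proof cases
    case eq
    from key show ?thesis
    proof
      assume "r a < r a'"
      with earlier[OF this] eq assms(3,4) show ?thesis
        by simp
    next
      assume "r a = r a' \<and> a' < a"
      with eq assms(2) show ?thesis
        by simp
    qed
  next
    case same
    from key show ?thesis
    proof
      assume "r a < r a'"
      with earlier[of a a1] same assms(3,4) show ?thesis
        by simp
    next
      assume "r a = r a' \<and> a' < a"
      with same assms(2) show ?thesis
        by simp
    qed
  next
    case diff
    have "r a' \<le> r a1"
      using monoD[OF assms(1)] diff(2) by simp
    with key diff(1) have "r a < r a1"
      by auto
    with earlier[OF this] diff show ?thesis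
      by simp
  qed
  with Pair show ?thesis
    by simp
qed

lemma arc_edge_shrink_end:
  assumes "r a' \<noteq> r b'" "arc_edge r (a, b) (a', b')"
  shows "a < b' \<and> r a \<noteq> r b' \<and> ((a, b') = (a', b') \<or> arc_edge r (a, b') (a', b'))"
  using assms by auto

lemma arc_mop_witness_into_lo:
  assumes "mono r" and max: "arc_mop r lo hi X Y" and "(lo, b) \<in> Y"
    and "(a, b') \<in> interval_arcs r (Suc lo) hi" "arc_edge r (a, b') (lo, b)"
  shows "(a, b) \<in> Y \<inter> interval_arcs r (Suc lo) hi \<and> ((a, b') = (a, b) \<or> arc_edge r (a, b') (a, b))"
proof -
  have yV: "(lo, b) \<in> interval_arcs r lo hi"
    using assms(3) max_orthogonal_pair_subset_V[OF max] by blast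
  have bounds: "lo < a" "a < b" "b \<le> b'" "r a \<noteq> r lo" "r a \<noteq> r b"
    using assms(4,5) by auto
  have "(a, b) \<in> Y"
  proof (rule max_orthogonal_pair_right_closed[OF max assms(3)])
    show "(a, b) \<in> interval_arcs r lo hi"
      using bounds yV by simp
    have "r lo < r a"
      using mono_less_if_neq[OF assms(1)] bounds by (metis less_imp_le)
    then show "w = (lo, b) \<or> arc_edge r w (lo, b)" if "w = (a, b) \<or> arc_edge r w (a, b)" for w
      using arc_edge_into_lower_start[OF assms(1)] bounds yV that by simp
  qed
  moreover have "(a, b') = (a, b) \<or> arc_edge r (a, b') (a, b)"
    using arc_edge_extend_end[of a b b' "(a, b)"] bounds by simp
  ultimately show ?thesis
    using bounds yV by simp
qed

lemma arc_mop_witness_from_lo: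
  assumes "mono r" and max: "arc_mop r lo hi X Y" and "(lo, b) \<in> X"
    and "(a, b') \<in> interval_arcs r (Suc lo) hi" "arc_edge r (lo, b) (a, b')"
  shows "(a, b) \<in> X \<inter> interval_arcs r (Suc lo) hi \<and> ((a, b) = (a, b') \<or> arc_edge r (a, b) (a, b'))"
proof -
  have xV: "(lo, b) \<in> interval_arcs r lo hi"
    using assms(3) max_orthogonal_pair_subset_V[OF max] by blast
  have bounds: "lo < a" "a < b'" "b' \<le> b" "r lo = r a"
    using assms(4,5) by auto
  have "(a, b) \<in> X"
  proof (rule max_orthogonal_pair_left_closed[OF max assms(3)])
    show "(a, b) \<in> interval_arcs r lo hi"
      using bounds xV by simp
    show "(lo, b) = w \<or> arc_edge r (lo, b) w"
      if "w \<in> interval_arcs r lo hi" "(a, b) = w \<or> arc_edge r (a, b) w" for w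
      using arc_edge_lower_start[OF assms(1), of lo a b w] bounds that by (cases w) auto
  qed
  moreover have "(a, b) = (a, b') \<or> arc_edge r (a, b) (a, b')"
    using arc_edge_extend_end[of a b' b "(a, b')"] bounds by simp
  ultimately show ?thesis
    using bounds xV by simp
qed

lemma arc_mop_witness_from_hi:
  assumes max: "arc_mop r lo (Suc h) X Y" and "(a, Suc h) \<in> X"
    and "(a', b') \<in> interval_arcs r lo h" "arc_edge r (a, Suc h) (a', b')"
  shows "(a, b') \<in> X \<inter> interval_arcs r lo h \<and> ((a, b') = (a', b') \<or> arc_edge r (a, b') (a', b'))"
proof -
  have xV: "(a, Suc h) \<in> interval_arcs r lo (Suc h)"
    using assms(2) max_orthogonal_pair_subset_V[OF max] by blast
  have "b' \<le> h" "r a' \<noteq> r b'"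
    using assms(3) by auto
  then have shrunk: "a < b'" "r a \<noteq> r b'" "(a, b') = (a', b') \<or> arc_edge r (a, b') (a', b')"
    using arc_edge_shrink_end assms(4) by blast+
  have "(a, b') \<in> X"
  proof (rule max_orthogonal_pair_left_closed[OF max assms(2)])
    show "(a, b') \<in> interval_arcs r lo (Suc h)"
      using shrunk xV \<open>b' \<le> h\<close> by simp
    show "(a, Suc h) = w \<or> arc_edge r (a, Suc h) w" if "(a, b') = w \<or> arc_edge r (a, b') w" for w
      using arc_edge_extend_end[of a b' "Suc h" w] shrunk \<open>b' \<le> h\<close> that by simp
  qed
  with shrunk xV \<open>b' \<le> h\<close> show ?thesis
    by simp
qed

lemma arc_mop_restrict_Suc_lo:
  assumes "mono r" and max: "arc_mop r lo hi X Y"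
  shows "arc_mop r (Suc lo) hi (X \<inter> interval_arcs r (Suc lo) hi) (Y \<inter> interval_arcs r (Suc lo) hi)"
proof (rule max_orthogonal_pair_restrict[OF max])
  let ?V = "interval_arcs r lo hi" and ?V' = "interval_arcs r (Suc lo) hi"
  show "?V' \<subseteq> ?V"
    by (auto simp: interval_arcs_def)
  have starts_at_lo: "\<exists>b. w = (lo, b)" if "w \<in> ?V" "w \<notin> ?V'" for w
    using that by (cases w) auto
  show "\<exists>y'\<in>Y \<inter> ?V'. x = y' \<or> arc_edge r x y'"
    if x: "x \<in> ?V'" and y: "y \<in> Y" and xy: "x = y \<or> arc_edge r x y" for x y
  proof (cases "y \<in> ?V'")
    case False
    have "y \<in> ?V"
      using y max_orthogonal_pair_subset_V[OF max] by blast
    then obtain b where y_eq: "y = (lo, b)"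
      using starts_at_lo False by blast
    obtain a b' where x_eq: "x = (a, b')"
      by (cases x)
    have "arc_edge r (a, b') (lo, b)"
      using x xy unfolding x_eq y_eq by auto
    with arc_mop_witness_into_lo[OF assms y[unfolded y_eq] x[unfolded x_eq]] show ?thesis
      unfolding x_eq by blast
  qed (use y xy in blast)
  show "\<exists>x'\<in>X \<inter> ?V'. x' = y \<or> arc_edge r x' y"
    if y: "y \<in> ?V'" and x: "x \<in> X" and xy: "x = y \<or> arc_edge r x y" for x y
  proof (cases "x \<in> ?V'")
    case False
    have "x \<in> ?V"
      using x max_orthogonal_pair_subset_V[OF max] by blast
    then obtain b where x_eq: "x = (lo, b)"
      using starts_at_lo False by blast
    obtain a b' where y_eq: "y = (a, b')"
      by (cases y)
    have "arc_edge r (lo, b) (a, b')"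
      using y xy unfolding x_eq y_eq by auto
    with arc_mop_witness_from_lo[OF assms x[unfolded x_eq] y[unfolded y_eq]] show ?thesis
      unfolding y_eq by blast
  qed (use x xy in blast)
qed

lemma arc_mop_restrict_Suc_hi:
  assumes max: "arc_mop r lo (Suc h) X Y"
  shows "arc_mop r lo h (X \<inter> interval_arcs r lo h) (Y \<inter> interval_arcs r lo h)"
proof (rule max_orthogonal_pair_restrict[OF max])
  let ?V = "interval_arcs r lo (Suc h)" and ?V' = "interval_arcs r lo h"
  show "?V' \<subseteq> ?V"
    by (auto simp: interval_arcs_def)
  have ends_at_hi: "\<exists>a. w = (a, Suc h)" if "w \<in> ?V" "w \<notin> ?V'" for w
    using that by (cases w) auto
  show "\<exists>y'\<in>Y \<inter> ?V'. x = y' \<or> arc_edge r x y'"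
    if x: "x \<in> ?V'" and y: "y \<in> Y" and xy: "x = y \<or> arc_edge r x y" for x y
  proof (cases "y \<in> ?V'")
    case False
    have "y \<in> ?V"
      using y max_orthogonal_pair_subset_V[OF max] by blast
    then obtain a where y_eq: "y = (a, Suc h)"
      using ends_at_hi False by blast
    with x xy show ?thesis
      by (cases x) auto
  qed (use y xy in blast)
  show "\<exists>x'\<in>X \<inter> ?V'. x' = y \<or> arc_edge r x' y"
    if y: "y \<in> ?V'" and x: "x \<in> X" and xy: "x = y \<or> arc_edge r x y" for x y
  proof (cases "x \<in> ?V'")
    case False
    have "x \<in> ?V"
      using x max_orthogonal_pair_subset_V[OF max] by blast
    then obtain a where x_eq: "x = (a, Suc h)"
      using ends_at_hi False by blast
    obtain a' b' where y_eq: "y = (a', b')"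
      by (cases y)
    have "arc_edge r (a, Suc h) (a', b')"
      using y xy unfolding x_eq y_eq by auto
    with arc_mop_witness_from_hi[OF max x[unfolded x_eq] y[unfolded y_eq]] show ?thesis
      unfolding y_eq by blast
  qed (use x xy in blast)
qed

section \<open>Upper bound\<close>

definition arcs_from :: "(nat \<Rightarrow> nat) \<Rightarrow> nat \<Rightarrow> nat \<Rightarrow> (nat \<times> nat) set" where
  "arcs_from r lo hi = {w \<in> interval_arcs r lo hi. fst w = lo}"

definition arcs_into :: "(nat \<Rightarrow> nat) \<Rightarrow> nat \<Rightarrow> nat \<Rightarrow> (nat \<times> nat) set" where
  "arcs_into r lo hi = {w \<in> interval_arcs r lo hi. snd w = hi}"

lemma arc_mop_arcs_from_comparable:
  assumes "arc_mop r lo hi X Y" "arc_mop r lo hi X' Y'"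
  shows "X \<inter> arcs_from r lo hi \<subseteq> X' \<inter> arcs_from r lo hi \<or>
    X' \<inter> arcs_from r lo hi \<subseteq> X \<inter> arcs_from r lo hi"
proof (rule comparable_if_up_closed[where R = "\<lambda>u v. snd v < snd u"])
  have down_closed: "v \<in> Z \<inter> arcs_from r lo hi"
    if max: "arc_mop r lo hi Z W" and uZ: "u \<in> Z \<inter> arcs_from r lo hi"
      and vS: "v \<in> arcs_from r lo hi" and lt: "snd v < snd u" for Z W u v
  proof -
    obtain b b' where u: "u = (lo, b')" and v: "v = (lo, b)" "(lo, b) \<in> interval_arcs r lo hi"
      using uZ vS unfolding arcs_from_def by (metis (mono_tags, lifting) IntD2 mem_Collect_eq prod.collapse)
    have "v \<in> Z"
    proof (rule max_orthogonal_pair_left_closed[OF max])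
      show "u \<in> Z" "v \<in> interval_arcs r lo hi"
        using uZ v by auto
      show "u = w \<or> arc_edge r u w" if "v = w \<or> arc_edge r v w" for w
        using arc_edge_extend_end[of lo b b' w] that lt u v by simp
    qed
    with vS show ?thesis
      by blast
  qed
  show "v \<in> X \<inter> arcs_from r lo hi"
    if "u \<in> X \<inter> arcs_from r lo hi" "v \<in> arcs_from r lo hi" "snd v < snd u" for u v
    using down_closed[OF assms(1) that] .
  show "v \<in> X' \<inter> arcs_from r lo hi"
    if "u \<in> X' \<inter> arcs_from r lo hi" "v \<in> arcs_from r lo hi" "snd v < snd u" for u v
    using down_closed[OF assms(2) that] .
  show "snd v < snd u \<or> snd u < snd v"
    if "u \<in> arcs_from r lo hi" "v \<in> arcs_from r lo hi" "u \<noteq> v" for u v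
    using that unfolding arcs_from_def by (auto simp: prod_eq_iff)
qed auto

lemma arc_mop_arcs_into_comparable:
  assumes "mono r" "arc_mop r lo hi X Y" "arc_mop r lo hi X' Y'"
  shows "Y \<inter> arcs_into r lo hi \<subseteq> Y' \<inter> arcs_into r lo hi \<or>
    Y' \<inter> arcs_into r lo hi \<subseteq> Y \<inter> arcs_into r lo hi"
proof (rule comparable_if_up_closed[where
      R = "\<lambda>u v. r (fst u) < r (fst v) \<or> (r (fst u) = r (fst v) \<and> fst v < fst u)"])
  have up_closed: "v \<in> W \<inter> arcs_into r lo hi"
    if max: "arc_mop r lo hi Z W" and uW: "u \<in> W \<inter> arcs_into r lo hi"
      and vS: "v \<in> arcs_into r lo hi"
      and above: "r (fst u) < r (fst v) \<or> (r (fst u) = r (fst v) \<and> fst v < fst u)" for Z W u v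
  proof -
    obtain a a' where u: "u = (a, hi)" "(a, hi) \<in> interval_arcs r lo hi"
      and v: "v = (a', hi)" "(a', hi) \<in> interval_arcs r lo hi"
      using uW vS unfolding arcs_into_def by (metis (mono_tags, lifting) IntD2 mem_Collect_eq prod.collapse)
    have "v \<in> W"
    proof (rule max_orthogonal_pair_right_closed[OF max])
      show "u \<in> W" "v \<in> interval_arcs r lo hi"
        using uW v by auto
      show "w = u \<or> arc_edge r w u" if "w = v \<or> arc_edge r w v" for w
        using arc_edge_into_lower_start[OF assms(1), of a hi a' w] that above u v by simp
    qed
    with vS show ?thesis
      by blast
  qed
  show "v \<in> Y \<inter> arcs_into r lo hi"
    if "u \<in> Y \<inter> arcs_into r lo hi" "v \<in> arcs_into r lo hi"
      "r (fst u) < r (fst v) \<or> (r (fst u) = r (fst v) \<and> fst v < fst u)" for u v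
    using up_closed[OF assms(2) that] .
  show "v \<in> Y' \<inter> arcs_into r lo hi"
    if "u \<in> Y' \<inter> arcs_into r lo hi" "v \<in> arcs_into r lo hi"
      "r (fst u) < r (fst v) \<or> (r (fst u) = r (fst v) \<and> fst v < fst u)" for u v
    using up_closed[OF assms(3) that] .
  show "(r (fst u) < r (fst v) \<or> (r (fst u) = r (fst v) \<and> fst v < fst u)) \<or>
      (r (fst v) < r (fst u) \<or> (r (fst v) = r (fst u) \<and> fst u < fst v))"
    if "u \<in> arcs_into r lo hi" "v \<in> arcs_into r lo hi" "u \<noteq> v" for u v
    using that unfolding arcs_into_def by (auto simp: prod_eq_iff)
qed auto

lemma embeds_arc_lattice_Suc_lo:
  assumes "mono r" "embeds_in_Rd (fst ` arc_lattice r (Suc lo) hi) (\<subseteq>) d"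
  shows "embeds_in_Rd (fst ` arc_lattice r lo hi) (\<subseteq>) (Suc d)"
proof (rule embeds_in_Rd_subset_Suc[OF assms(2),
      where \<pi> = "\<lambda>X. X \<inter> interval_arcs r (Suc lo) hi"
        and c = "\<lambda>X. real (card (X \<inter> arcs_from r lo hi))"])
  let ?V = "interval_arcs r lo hi" and ?V' = "interval_arcs r (Suc lo) hi" and ?R = "arcs_from r lo hi"
  show "X \<inter> ?V' \<in> fst ` arc_lattice r (Suc lo) hi" if "X \<in> fst ` arc_lattice r lo hi" for X
    using that arc_mop_restrict_Suc_lo[OF assms(1)] by (meson mem_fst_mop_lattice)
  fix X X' assume "X \<in> fst ` arc_lattice r lo hi" "X' \<in> fst ` arc_lattice r lo hi"
  then obtain Y Y' where max: "arc_mop r lo hi X Y" and max': "arc_mop r lo hi X' Y'"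
    by (meson mem_fst_mop_lattice)
  have "X \<subseteq> ?V" "X' \<subseteq> ?V"
    using max_orthogonal_pair_subset_V[OF max] max_orthogonal_pair_subset_V[OF max'] by auto
  moreover have "?V \<subseteq> ?V' \<union> ?R"
    by (auto simp: arcs_from_def)
  ultimately have "X \<subseteq> X' \<longleftrightarrow> X \<inter> ?V' \<subseteq> X' \<inter> ?V' \<and> X \<inter> ?R \<subseteq> X' \<inter> ?R"
    by blast
  also have "X \<inter> ?R \<subseteq> X' \<inter> ?R \<longleftrightarrow> card (X \<inter> ?R) \<le> card (X' \<inter> ?R)"
    using finite_interval_arcs arc_mop_arcs_from_comparable[OF max max']
    by (intro card_le_iff_subset_if_comparable[symmetric]) (auto simp: arcs_from_def)
  finally show "X \<subseteq> X' \<longleftrightarrow>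
      X \<inter> ?V' \<subseteq> X' \<inter> ?V' \<and> real (card (X \<inter> ?R)) \<le> real (card (X' \<inter> ?R))"
    by simp
qed

lemma embeds_arc_lattice_Suc_hi:
  assumes "mono r" "embeds_in_Rd (fst ` arc_lattice r lo h) (\<subseteq>) d"
  shows "embeds_in_Rd (fst ` arc_lattice r lo (Suc h)) (\<subseteq>) (Suc d)"
proof (rule embeds_in_Rd_subset_Suc[OF assms(2),
      where \<pi> = "\<lambda>X. X \<inter> interval_arcs r lo h"
        and c = "\<lambda>X. - real (card (right_orth (interval_arcs r lo (Suc h)) (arc_edge r) X
                                    \<inter> arcs_into r lo (Suc h)))"])
  let ?V = "interval_arcs r lo (Suc h)" and ?V' = "interval_arcs r lo h"
    and ?C = "arcs_into r lo (Suc h)"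
  show "X \<inter> ?V' \<in> fst ` arc_lattice r lo h" if "X \<in> fst ` arc_lattice r lo (Suc h)" for X
    using that arc_mop_restrict_Suc_hi by (meson mem_fst_mop_lattice)
  fix X X' assume "X \<in> fst ` arc_lattice r lo (Suc h)" "X' \<in> fst ` arc_lattice r lo (Suc h)"
  then obtain Y Y' where max: "arc_mop r lo (Suc h) X Y" and max': "arc_mop r lo (Suc h) X' Y'"
    by (meson mem_fst_mop_lattice)
  have Y: "right_orth ?V (arc_edge r) X = Y" and Y': "right_orth ?V (arc_edge r) X' = Y'"
    using conjunct2[OF max[unfolded max_orthogonal_pair_iff]]
      conjunct2[OF max'[unfolded max_orthogonal_pair_iff]] by simp_all
  have "Y \<subseteq> ?V" "Y' \<subseteq> ?V"
    using max_orthogonal_pair_subset_V[OF max] max_orthogonal_pair_subset_V[OF max'] by auto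
  moreover have "?V \<subseteq> ?V' \<union> ?C"
    by (auto simp: arcs_into_def)
  ultimately have "X \<subseteq> X' \<longleftrightarrow> Y' \<inter> ?V' \<subseteq> Y \<inter> ?V' \<and> Y' \<inter> ?C \<subseteq> Y \<inter> ?C"
    unfolding max_orthogonal_pair_subset_iff[OF max max'] by blast
  also have "Y' \<inter> ?V' \<subseteq> Y \<inter> ?V' \<longleftrightarrow> X \<inter> ?V' \<subseteq> X' \<inter> ?V'"
    using max_orthogonal_pair_subset_iff[OF arc_mop_restrict_Suc_hi[OF max]
        arc_mop_restrict_Suc_hi[OF max']] by simp
  also have "Y' \<inter> ?C \<subseteq> Y \<inter> ?C \<longleftrightarrow> card (Y' \<inter> ?C) \<le> card (Y \<inter> ?C)"
    using finite_interval_arcs arc_mop_arcs_into_comparable[OF assms(1) max' max]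
    by (intro card_le_iff_subset_if_comparable[symmetric]) (auto simp: arcs_into_def)
  finally show "X \<subseteq> X' \<longleftrightarrow> X \<inter> ?V' \<subseteq> X' \<inter> ?V' \<and>
      - real (card (right_orth ?V (arc_edge r) X \<inter> ?C)) \<le>
      - real (card (right_orth ?V (arc_edge r) X' \<inter> ?C))"
    unfolding Y Y' by simp
qed

definition block_size :: "(nat \<Rightarrow> nat) \<Rightarrow> nat \<Rightarrow> nat \<Rightarrow> nat \<Rightarrow> nat" where
  "block_size r lo hi x = card {y \<in> {lo..hi}. r y = r x}"

lemma embeds_arc_lattice_one_region:
  assumes "mono r" "r lo = r hi"
  shows "embeds_in_Rd (fst ` arc_lattice r lo hi) (\<subseteq>) d"
proof (rule embeds_in_Rd_at_most_one)
  have "r a = r b" if "lo \<le> a" "a < b" "b \<le> hi" for a b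
    using monoD[OF assms(1), of lo a] monoD[OF assms(1), of a b] monoD[OF assms(1), of b hi]
      assms(2) that by simp
  then have "interval_arcs r lo hi = {}"
    by (auto simp: interval_arcs_def)
  then show "fst ` arc_lattice r lo hi \<subseteq> {{}}"
    by (auto simp: mop_lattice_def dest: max_orthogonal_pair_subset_V)
qed simp

lemma block_size_Suc_lo:
  assumes "x \<in> {Suc lo..hi}" "r x \<noteq> r lo"
  shows "block_size r (Suc lo) hi x = block_size r lo hi x" "block_size r lo hi x \<le> hi - lo"
proof -
  have block: "{y \<in> {Suc lo..hi}. r y = r x} = {y \<in> {lo..hi}. r y = r x}"
    using assms(2) by (auto simp: Suc_le_eq order_le_less)
  then show "block_size r (Suc lo) hi x = block_size r lo hi x"
    by (simp add: block_size_def)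
  have "card {y \<in> {Suc lo..hi}. r y = r x} \<le> card {Suc lo..hi}"
    by (intro card_mono) auto
  with block show "block_size r lo hi x \<le> hi - lo"
    by (simp add: block_size_def)
qed

lemma block_size_Suc_hi:
  assumes "x \<in> {lo..h}" "r x \<noteq> r (Suc h)"
  shows "block_size r lo h x = block_size r lo (Suc h) x" "block_size r lo (Suc h) x \<le> Suc h - lo"
proof -
  have block: "{y \<in> {lo..h}. r y = r x} = {y \<in> {lo..Suc h}. r y = r x}"
    using assms(2) by (auto simp: le_Suc_eq)
  then show "block_size r lo h x = block_size r lo (Suc h) x"
    by (simp add: block_size_def)
  have "card {y \<in> {lo..h}. r y = r x} \<le> card {lo..h}"
    by (intro card_mono) auto
  with block show "block_size r lo (Suc h) x \<le> Suc h - lo"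
    by (simp add: block_size_def)
qed

lemma embeds_arc_lattice_block_size:
  assumes "mono r" "x \<in> {lo..hi}"
  shows "embeds_in_Rd (fst ` arc_lattice r lo hi) (\<subseteq>) (Suc hi - lo - block_size r lo hi x)"
  using assms(2)
proof (induction "hi - lo" arbitrary: lo hi rule: less_induct)
  case less
  show ?case
  proof (cases "r lo = r hi")
    case True
    then show ?thesis
      by (rule embeds_arc_lattice_one_region[OF assms(1)])
  next
    case False
    with less.prems have "lo < hi"
      by (cases "lo = hi") auto
    show ?thesis
    proof (cases "r x = r lo")
      case False
      with less.prems have x: "x \<in> {Suc lo..hi}"
        by (cases "x = lo") auto
      moreover have "hi - Suc lo < hi - lo"
        using \<open>lo < hi\<close> by arith
      ultimately have "embeds_in_Rd (fst ` arc_lattice r (Suc lo) hi) (\<subseteq>)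
          (Suc hi - Suc lo - block_size r (Suc lo) hi x)"
        using less.hyps[of hi "Suc lo"] by blast
      then show ?thesis
        using embeds_arc_lattice_Suc_lo[OF assms(1)] block_size_Suc_lo[OF x False] \<open>lo < hi\<close>
        by (simp add: Suc_diff_le)
    next
      case True
      with \<open>r lo \<noteq> r hi\<close> obtain h where hi: "hi = Suc h" and "r x \<noteq> r (Suc h)"
        using \<open>lo < hi\<close> by (metis lessE)
      with less.prems have x: "x \<in> {lo..h}"
        by (cases "x = hi") auto
      moreover have "h - lo < hi - lo"
        using \<open>lo < hi\<close> hi by arith
      ultimately have "embeds_in_Rd (fst ` arc_lattice r lo h) (\<subseteq>) (Suc h - lo - block_size r lo h x)"
        using less.hyps[of h lo] by blast
      then show ?thesis
        using embeds_arc_lattice_Suc_hi[OF assms(1)] block_size_Suc_hi[OF x \<open>r x \<noteq> r (Suc h)\<close>]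
          \<open>lo < hi\<close> hi by (simp add: Suc_diff_le)
    qed
  qed
qed

section \<open>A large independent set of arcs\<close>

definition region_pos :: "(nat \<Rightarrow> nat) \<Rightarrow> nat \<Rightarrow> nat \<Rightarrow> nat" where
  "region_pos r lo x = card {y \<in> {lo..<x}. r y = r x}"

lemma region_pos_less_block_size:
  assumes "x \<in> {lo..hi}"
  shows "region_pos r lo x < block_size r lo hi x"
  unfolding region_pos_def block_size_def
  using assms by (intro psubset_card_mono) auto

lemma region_pos_strict_mono:
  assumes "lo \<le> a" "a < b" "r a = r b"
  shows "region_pos r lo a < region_pos r lo b"
  unfolding region_pos_def
  using assms by (intro psubset_card_mono) auto

lemma region_pos_Suc:
  assumes "lo \<le> y" "r (Suc y) = r y"
  shows "region_pos r lo (Suc y) = Suc (region_pos r lo y)"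
proof -
  have "{z \<in> {lo..<Suc y}. r z = r (Suc y)} = insert y {z \<in> {lo..<y}. r z = r y}"
    using assms by auto
  then show ?thesis
    unfolding region_pos_def by simp
qed

lemma region_pos_earlier:
  assumes "mono r" "p < region_pos r lo y"
  shows "\<exists>e. lo \<le> e \<and> e < y \<and> r e = r y \<and> region_pos r lo e = p"
  using assms(2)
proof (induction y)
  case 0
  then show ?case
    by (simp add: region_pos_def)
next
  case (Suc y)
  then have "{z \<in> {lo..<Suc y}. r z = r (Suc y)} \<noteq> {}"
    unfolding region_pos_def by (metis card.empty not_less_zero)
  then obtain z where z: "lo \<le> z" "z \<le> y" "r z = r (Suc y)"
    by auto
  have "r y = r (Suc y)"
    using monoD[OF assms(1), of z y] monoD[OF assms(1), of y "Suc y"] z by simp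
  then have "region_pos r lo (Suc y) = Suc (region_pos r lo y)"
    using z by (intro region_pos_Suc) auto
  with Suc.prems consider "p = region_pos r lo y" | "p < region_pos r lo y"
    by linarith
  then show ?case
  proof cases
    case 1
    then show ?thesis
      using z \<open>r y = r (Suc y)\<close> by (intro exI[of _ y]) auto
  next
    case 2
    then obtain e where "lo \<le> e" "e < y" "r e = r y" "region_pos r lo e = p"
      using Suc.IH by blast
    with \<open>r y = r (Suc y)\<close> show ?thesis
      by (intro exI[of _ e]) simp
  qed
qed

lemma region_pos_between:
  assumes "mono r" "p < region_pos r lo y" "r x < r y"
  shows "\<exists>e. x < e \<and> e < y \<and> region_pos r lo e = p"
proof -
  obtain e where e: "e < y" "r e = r y" "region_pos r lo e = p"
    using region_pos_earlier[OF assms(1,2)] by blast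
  have "\<not> e \<le> x"
    using monoD[OF assms(1), of e x] assms(3) e(2) by auto
  then have "x < e"
    by simp
  with e show ?thesis
    by blast
qed

definition position_successor_arcs :: "(nat \<Rightarrow> nat) \<Rightarrow> nat \<Rightarrow> nat \<Rightarrow> (nat \<times> nat) set" where
  "position_successor_arcs r lo hi = {(a, b). lo \<le> a \<and> a < b \<and> b \<le> hi \<and>
     region_pos r lo b = region_pos r lo a \<and>
     (\<forall>c. a < c \<longrightarrow> c < b \<longrightarrow> region_pos r lo c \<noteq> region_pos r lo a)}"

lemma position_successor_arcs_subset: "position_successor_arcs r lo hi \<subseteq> interval_arcs r lo hi"
  unfolding position_successor_arcs_def interval_arcs_def
  using region_pos_strict_mono by fastforce

lemma position_successor_arcs_unique:
  assumes "(a, b) \<in> position_successor_arcs r lo hi" "(a, b') \<in> position_successor_arcs r lo hi"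
  shows "b = b'"
  using assms unfolding position_successor_arcs_def by (auto intro: linorder_cases[of b b'])

lemma mem_position_successor_arcs:
  "(a, b) \<in> position_successor_arcs r lo hi \<longleftrightarrow> lo \<le> a \<and> a < b \<and> b \<le> hi \<and>
     region_pos r lo b = region_pos r lo a \<and>
     (\<forall>c. a < c \<longrightarrow> c < b \<longrightarrow> region_pos r lo c \<noteq> region_pos r lo a)"
  by (simp add: position_successor_arcs_def)

lemma position_successor_arcs_not_nested:
  assumes "mono r" "(a, b) \<in> position_successor_arcs r lo hi" "(c, d) \<in> position_successor_arcs r lo hi"
    and "a < c" "r a = r c"
  shows "b < d"
proof (rule ccontr)
  assume "\<not> b < d"
  let ?pos = "region_pos r lo"
  have "(c, d) \<in> interval_arcs r lo hi"
    using assms(3) position_successor_arcs_subset by blast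
  then have "r c < r d"
    using mono_less_if_neq[OF assms(1), of c d] by simp
  have "lo \<le> a" and b_next: "\<forall>e. a < e \<longrightarrow> e < b \<longrightarrow> ?pos e \<noteq> ?pos a"
    using assms(2) by (simp_all add: mem_position_successor_arcs)
  have "?pos a < ?pos c"
    using region_pos_strict_mono[OF \<open>lo \<le> a\<close> assms(4,5)] .
  also have "?pos c = ?pos d"
    using assms(3) by (simp add: mem_position_successor_arcs)
  finally obtain e where "a < e" "e < d" "?pos e = ?pos a"
    using region_pos_between[OF assms(1)] \<open>r c < r d\<close> assms(5) by metis
  with b_next \<open>\<not> b < d\<close> show False
    by simp
qed

lemma position_successor_arcs_not_crossing:
  assumes "mono r" "(a, b) \<in> position_successor_arcs r lo hi" "(c, d) \<in> position_successor_arcs r lo hi"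
    and "c < a" "a < d" "r c \<noteq> r a" "r a \<noteq> r d"
  shows "b < d"
proof (rule ccontr)
  assume "\<not> b < d"
  let ?pos = "region_pos r lo"
  have "?pos a \<noteq> ?pos c" "?pos d = ?pos c"
    using assms(3-5) by (auto simp: mem_position_successor_arcs)
  then consider "?pos c < ?pos a" | "?pos a < ?pos d"
    by linarith
  then show False
  proof cases
    case 1
    moreover have "r c < r a"
      using mono_less_if_neq[OF assms(1)] assms(4,6) by simp
    ultimately obtain e where "c < e" "e < a" "?pos e = ?pos c"
      using region_pos_between[OF assms(1)] by metis
    with assms(3,5) show False
      by (auto simp: mem_position_successor_arcs)
  next
    case 2
    moreover have "r a < r d"
      using mono_less_if_neq[OF assms(1)] assms(5,7) by simp
    ultimately obtain e where "a < e" "e < d" "?pos e = ?pos a"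
      using region_pos_between[OF assms(1)] by metis
    with assms(2) \<open>\<not> b < d\<close> show False
      by (auto simp: mem_position_successor_arcs)
  qed
qed

lemma position_successor_arcs_independent:
  assumes "mono r" "u \<in> position_successor_arcs r lo hi" "v \<in> position_successor_arcs r lo hi"
  shows "\<not> arc_edge r u v"
proof
  assume edge: "arc_edge r u v"
  obtain a b c d where u: "u = (a, b)" and v: "v = (c, d)"
    by (cases u, cases v)
  from edge consider (same) "r a = r c" "a \<le> c" "d \<le> b" "(a, b) \<noteq> (c, d)"
    | (diff) "r a \<noteq> r c" "c < a" "a < d" "d \<le> b" "r a \<noteq> r d"
    unfolding u v by auto
  then show False
  proof cases
    case same
    then have "a < c"
      using position_successor_arcs_unique assms(2,3) unfolding u v by (metis order_le_less)
    with same show False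
      using position_successor_arcs_not_nested[OF assms(1) assms(2,3)[unfolded u v]] by simp
  next
    case diff
    then show False
      using position_successor_arcs_not_crossing[OF assms(1) assms(2,3)[unfolded u v]] by simp
  qed
qed

definition last_of_position :: "(nat \<Rightarrow> nat) \<Rightarrow> nat \<Rightarrow> nat \<Rightarrow> nat set" where
  "last_of_position r lo hi =
     {a \<in> {lo..hi}. \<forall>b. a < b \<longrightarrow> b \<le> hi \<longrightarrow> region_pos r lo b \<noteq> region_pos r lo a}"

lemma fst_image_position_successor_arcs:
  "fst ` position_successor_arcs r lo hi = {lo..hi} - last_of_position r lo hi"
proof (intro equalityI subsetI)
  fix a assume "a \<in> fst ` position_successor_arcs r lo hi"
  then show "a \<in> {lo..hi} - last_of_position r lo hi"
    unfolding last_of_position_def position_successor_arcs_def by force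
next
  let ?pos = "region_pos r lo"
  fix a assume a: "a \<in> {lo..hi} - last_of_position r lo hi"
  define b where "b = (LEAST b. a < b \<and> b \<le> hi \<and> ?pos b = ?pos a)"
  have "\<exists>b. a < b \<and> b \<le> hi \<and> ?pos b = ?pos a"
    using a unfolding last_of_position_def by blast
  then have b: "a < b \<and> b \<le> hi \<and> ?pos b = ?pos a"
    unfolding b_def by (rule LeastI_ex)
  moreover have "?pos c \<noteq> ?pos a" if "a < c" "c < b" for c
    using not_less_Least[of c "\<lambda>b. a < b \<and> b \<le> hi \<and> ?pos b = ?pos a"] that b
    unfolding b_def by auto
  ultimately have "(a, b) \<in> position_successor_arcs r lo hi"
    using a by (auto simp: mem_position_successor_arcs)
  then show "a \<in> fst ` position_successor_arcs r lo hi"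
    by force
qed

lemma card_position_successor_arcs_eq:
  "card (position_successor_arcs r lo hi) = Suc hi - lo - card (last_of_position r lo hi)"
proof -
  have "inj_on fst (position_successor_arcs r lo hi)"
    using position_successor_arcs_unique by (fastforce intro: inj_onI)
  then have "card (position_successor_arcs r lo hi) = card ({lo..hi} - last_of_position r lo hi)"
    by (metis card_image fst_image_position_successor_arcs)
  moreover have "last_of_position r lo hi \<subseteq> {lo..hi}"
    unfolding last_of_position_def by blast
  moreover have "finite (last_of_position r lo hi)"
    using calculation(2) by (rule finite_subset) simp
  ultimately show ?thesis
    by (simp add: card_Diff_subset)
qed

lemma card_last_of_position_le:
  assumes "\<And>x. x \<in> {lo..hi} \<Longrightarrow> block_size r lo hi x \<le> m"
  shows "card (last_of_position r lo hi) \<le> m"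
proof -
  let ?L = "last_of_position r lo hi" and ?pos = "region_pos r lo"
  have "?pos b \<noteq> ?pos a" if "a \<in> ?L" "b \<in> ?L" "a < b" for a b
    using that unfolding last_of_position_def by auto
  then have "inj_on ?pos ?L"
    by (metis inj_onI linorder_neqE_nat)
  moreover have "?pos ` ?L \<subseteq> {..<m}"
  proof
    fix p assume "p \<in> ?pos ` ?L"
    then obtain a where "a \<in> {lo..hi}" "p = ?pos a"
      unfolding last_of_position_def by blast
    then show "p \<in> {..<m}"
      using region_pos_less_block_size[of a lo hi r] assms[of a] by simp
  qed
  ultimately show ?thesis
    using card_mono[of "{..<m}" "?pos ` ?L"] by (simp add: card_image)
qed

lemma arc_lattice_dim_ge:
  assumes "mono r" "\<And>x. x \<in> {lo..hi} \<Longrightarrow> block_size r lo hi x \<le> m"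
    and "embeds_in_Rd (arc_lattice r lo hi) mop_le d"
  shows "Suc hi - lo - m \<le> d"
proof -
  have "Suc hi - lo - m \<le> card (position_successor_arcs r lo hi)"
    unfolding card_position_successor_arcs_eq using card_last_of_position_le[OF assms(2)] by simp
  also have "\<dots> \<le> d"
  proof (rule mop_lattice_independent_card_le[OF assms(3)])
    show "position_successor_arcs r lo hi \<subseteq> interval_arcs r lo hi"
      by (rule position_successor_arcs_subset)
    then show "finite (position_successor_arcs r lo hi)"
      using finite_interval_arcs by (rule finite_subset)
    show "\<not> arc_edge r u v"
      if "u \<in> position_successor_arcs r lo hi" "v \<in> position_successor_arcs r lo hi" for u v
      using position_successor_arcs_independent[OF assms(1) that] .
  qed
  finally show ?thesis .
qed

lemma order_dimension_arc_lattice: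
  assumes "mono r" "x \<in> {lo..hi}"
    and "\<And>y. y \<in> {lo..hi} \<Longrightarrow> block_size r lo hi y \<le> block_size r lo hi x"
  shows "order_dimension (arc_lattice r lo hi) mop_le = Suc hi - lo - block_size r lo hi x"
  unfolding order_dimension_def
proof (rule Least_equality)
  show "embeds_in_Rd (arc_lattice r lo hi) mop_le (Suc hi - lo - block_size r lo hi x)"
    by (rule embeds_in_Rd_mop_lattice[OF embeds_arc_lattice_block_size[OF assms(1,2)]])
  show "Suc hi - lo - block_size r lo hi x \<le> d" if "embeds_in_Rd (arc_lattice r lo hi) mop_le d" for d
    using arc_lattice_dim_ge[OF assms(1,3) that] .
qed

section \<open>Compositions\<close>

definition region_index :: "nat list \<Rightarrow> nat \<Rightarrow> nat" where
  "region_index \<alpha> a = card {i. i < length \<alpha> \<and> sum_list (take (Suc i) \<alpha>) < a}"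

lemma mono_region_index: "mono (region_index \<alpha>)"
  unfolding region_index_def
  by (intro monoI card_mono) (auto intro: finite_subset[of _ "{..<length \<alpha>}"])

lemma sum_list_take_mono: "i \<le> j \<Longrightarrow> sum_list (take i \<alpha>) \<le> sum_list (take j (\<alpha> :: nat list))"
  by (metis le_add1 le_add_diff_inverse sum_list_append take_add)

lemma sum_list_take_Suc:
  "i < length \<alpha> \<Longrightarrow> sum_list (take (Suc i) \<alpha>) = sum_list (take i \<alpha>) + (\<alpha> :: nat list) ! i"
  by (simp add: take_Suc_conv_app_nth)

lemma region_index_eq:
  assumes "i < length \<alpha>" "a \<in> alpha_region \<alpha> i"
  shows "region_index \<alpha> a = i"
proof -
  have lower: "sum_list (take i \<alpha>) < a" and upper: "a \<le> sum_list (take (Suc i) \<alpha>)"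
    using assms(2) unfolding alpha_region_def by auto
  have "{j. j < length \<alpha> \<and> sum_list (take (Suc j) \<alpha>) < a} = {..<i}"
  proof (intro equalityI subsetI)
    fix j assume "j \<in> {j. j < length \<alpha> \<and> sum_list (take (Suc j) \<alpha>) < a}"
    then have "sum_list (take (Suc j) \<alpha>) < sum_list (take (Suc i) \<alpha>)"
      using upper by simp
    then show "j \<in> {..<i}"
      using sum_list_take_mono[of "Suc i" "Suc j" \<alpha>] by (cases "j < i") auto
  next
    fix j assume "j \<in> {..<i}"
    then have "sum_list (take (Suc j) \<alpha>) \<le> sum_list (take i \<alpha>)" "j < length \<alpha>"
      using sum_list_take_mono[of "Suc j" i \<alpha>] assms(1) by auto
    with lower show "j \<in> {j. j < length \<alpha> \<and> sum_list (take (Suc j) \<alpha>) < a}"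
      by simp
  qed
  then show ?thesis
    unfolding region_index_def by simp
qed

lemma ex_alpha_region:
  assumes "1 \<le> a" "a \<le> sum_list \<alpha>"
  shows "\<exists>i<length \<alpha>. a \<in> alpha_region \<alpha> i"
proof -
  let ?P = "\<lambda>j. j < length \<alpha> \<and> a \<le> sum_list (take (Suc j) \<alpha>)"
  define i where "i = (LEAST j. ?P j)"
  have "?P (length \<alpha> - 1)"
    using assms by (cases \<alpha> rule: rev_cases) auto
  then have "?P i"
    unfolding i_def by (rule LeastI)
  moreover have "sum_list (take i \<alpha>) < a"
  proof (cases i)
    case (Suc j)
    then have "\<not> ?P j"
      unfolding i_def by (metis Suc_n_not_le_n Least_le)
    with \<open>?P i\<close> Suc show ?thesis
      by simp
  qed (use assms in simp)
  ultimately show ?thesis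
    unfolding alpha_region_def by auto
qed

lemma same_region_iff_region_index:
  assumes "a \<in> {1..sum_list \<alpha>}" "b \<in> {1..sum_list \<alpha>}"
  shows "same_region \<alpha> a b \<longleftrightarrow> region_index \<alpha> a = region_index \<alpha> b"
  using ex_alpha_region[of a \<alpha>] ex_alpha_region[of b \<alpha>] assms region_index_eq
  unfolding same_region_def by (metis atLeastAtMost_iff)

lemma alpha_arcs_eq: "alpha_arcs \<alpha> = interval_arcs (region_index \<alpha>) 1 (sum_list \<alpha>)"
  unfolding alpha_arcs_def interval_arcs_def
  using same_region_iff_region_index by fastforce

lemma alpha_edge_eq:
  assumes "w \<in> alpha_arcs \<alpha>" "w' \<in> alpha_arcs \<alpha>"
  shows "alpha_edge \<alpha> w w' = arc_edge (region_index \<alpha>) w w'"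
proof -
  obtain a b a' b' where w: "w = (a, b)" and w': "w' = (a', b')"
    by (cases w, cases w')
  have "a \<in> {1..sum_list \<alpha>}" "a' \<in> {1..sum_list \<alpha>}" "b' \<in> {1..sum_list \<alpha>}"
    using assms unfolding w w' alpha_arcs_def by auto
  then show ?thesis
    using assms unfolding w w' alpha_edge_def
    by (simp add: same_region_iff_region_index Let_def)
qed

lemma Tam_eq: "Tam \<alpha> = arc_lattice (region_index \<alpha>) 1 (sum_list \<alpha>)"
proof -
  have "max_orthogonal_pair (alpha_arcs \<alpha>) (alpha_edge \<alpha>) =
      max_orthogonal_pair (alpha_arcs \<alpha>) (arc_edge (region_index \<alpha>))"
    by (intro ext max_orthogonal_pair_cong alpha_edge_eq)
  then show ?thesis
    unfolding Tam_def mop_lattice_def alpha_arcs_eq[symmetric] by simp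
qed

lemma block_size_region_index:
  assumes "i < length \<alpha>" "x \<in> alpha_region \<alpha> i"
  shows "block_size (region_index \<alpha>) 1 (sum_list \<alpha>) x = \<alpha> ! i"
proof -
  have "{y \<in> {1..sum_list \<alpha>}. region_index \<alpha> y = i} = alpha_region \<alpha> i"
  proof (intro equalityI subsetI)
    fix y assume "y \<in> {y \<in> {1..sum_list \<alpha>}. region_index \<alpha> y = i}"
    then show "y \<in> alpha_region \<alpha> i"
      using ex_alpha_region[of y \<alpha>] region_index_eq by force
  next
    fix y assume y: "y \<in> alpha_region \<alpha> i"
    have "sum_list (take (Suc i) \<alpha>) \<le> sum_list \<alpha>"
      using sum_list_take_mono[of "Suc i" "length \<alpha>" \<alpha>] assms(1) by simp
    with y show "y \<in> {y \<in> {1..sum_list \<alpha>}. region_index \<alpha> y = i}"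
      using region_index_eq[OF assms(1) y] unfolding alpha_region_def by auto
  qed
  then show ?thesis
    unfolding block_size_def region_index_eq[OF assms]
    by (simp add: alpha_region_def sum_list_take_Suc[OF assms(1)])
qed

lemma block_size_region_index_in_set:
  assumes "x \<in> {1..sum_list \<alpha>}"
  shows "block_size (region_index \<alpha>) 1 (sum_list \<alpha>) x \<in> set \<alpha>"
  using ex_alpha_region[of x \<alpha>] assms block_size_region_index by fastforce

lemma ex_block_size_region_index_Max:
  assumes "\<alpha> \<noteq> []" "\<forall>p\<in>set \<alpha>. 0 < p"
  shows "\<exists>x\<in>{1..sum_list \<alpha>}. block_size (region_index \<alpha>) 1 (sum_list \<alpha>) x = Max (set \<alpha>)"
proof -
  obtain i where i: "i < length \<alpha>" "\<alpha> ! i = Max (set \<alpha>)"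
    using Max_in[of "set \<alpha>"] assms(1) by (metis List.finite_set in_set_conv_nth set_empty)
  let ?x = "sum_list (take i \<alpha>) + 1"
  have "0 < \<alpha> ! i"
    using assms(2) i(1) by simp
  then have x: "?x \<in> alpha_region \<alpha> i"
    unfolding alpha_region_def using sum_list_take_Suc[OF i(1)] by simp
  then have "?x \<in> {1..sum_list \<alpha>}"
    using sum_list_take_mono[of "Suc i" "length \<alpha>" \<alpha>] i(1) unfolding alpha_region_def by auto
  with block_size_region_index[OF i(1) x] i(2) show ?thesis
    by auto
qed

theorem proposition4p11:
  fixes \<alpha> :: "nat list" and n :: nat
  assumes "n > 0" and "is_composition \<alpha> n"
  shows "order_dimension (Tam \<alpha>) mop_le = n - Max (set \<alpha>)"
proof -
  have n: "sum_list \<alpha> = n" and parts: "\<forall>p\<in>set \<alpha>. 0 < p" and "\<alpha> \<noteq> []"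
    using assms unfolding is_composition_def by auto
  obtain x where x: "x \<in> {1..n}" "block_size (region_index \<alpha>) 1 n x = Max (set \<alpha>)"
    using ex_block_size_region_index_Max[OF \<open>\<alpha> \<noteq> []\<close> parts] n by auto
  have "block_size (region_index \<alpha>) 1 n y \<le> block_size (region_index \<alpha>) 1 n x" if "y \<in> {1..n}" for y
    using block_size_region_index_in_set[of y \<alpha>] that n x(2) by simp
  then have "order_dimension (arc_lattice (region_index \<alpha>) 1 n) mop_le = n - Max (set \<alpha>)"
    using order_dimension_arc_lattice[OF mono_region_index x(1)] x(2) by simp
  then show ?thesis
    using Tam_eq[of \<alpha>] n by simp
qed

end
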